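(* Let $F$ be a finite field with $q=|F|$. Let $k,m,n\in\mathbb{N}$ with $k\le m\le n+1$, and fix $a\in F^k$. Then the number of $x\in F^{m+n+1}$ with $(x_0,\ldots,x_{k-1})=a$ and $\operatorname{rank}(H_{m,n}(x))\le m$ is $q^{2m-k}$.
   Context: $\mathbb{N}=\{0,1,2,\ldots\}$. For $x=(x_0,\ldots,x_N)\in F^{N+1}$ and integers $p,p'\ge -1$ with $p+p'\le N$, $H_{p,p'}(x)=(x_{i+j})_{0\le i\le p,\,0\le j\le p'}$. *)

theory Defs
  imports "Jordan_Normal_Form.DL_Rank"
begin

definition hankel :: "nat \<Rightarrow> nat \<Rightarrow> 'a list \<Rightarrow> 'a mat" where
  "hankel p p' x = mat (p + 1) (p' + 1) (\<lambda>(i, j). x ! (i + j))"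

definition mat_rank :: "'a::field mat \<Rightarrow> nat" where
  "mat_rank A = vec_space.rank (dim_row A) A"

end

theory Submission
  imports Defs "HOL-Computational_Algebra.Formal_Power_Series"
begin

text \<open>Read \<open>x\<close> as the power series \<open>X = \<Sum> x\<^sub>i z\<^sup>i\<close>. Then \<open>rank H\<^sub>m\<^sub>,\<^sub>n(x) \<le> m\<close> says that
  some nonzero \<open>U\<close> of degree at most \<open>m\<close> kills the coefficients \<open>m, \<dots>, m + n\<close> of \<open>U X\<close>.
  We show by induction on \<open>m\<close> that every prefix of length \<open>m\<close> has exactly \<open>q\<^sup>m\<close> such
  extensions; summing over the \<open>q\<^bsup>m-k\<^esup>\<close> prefixes of length \<open>m\<close> extending \<open>a\<close> gives the
  claim. If the prefix is zero, the condition just says \<open>x\<^sub>0 = \<dots> = x\<^sub>n = 0\<close>. Otherwise let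
  \<open>x\<^sub>d\<close> be its first nonzero entry and \<open>X = z\<^sup>d X'\<close>: the condition on \<open>X\<close> is the same condition
  on the coefficients of \<open>1/X'\<close> from index \<open>d + 2\<close> on, for \<open>(m - d - 1, n - d - 1)\<close>.
  Replacing \<open>x\<^sub>d, x\<^sub>d\<^sub>+\<^sub>1, \<dots>\<close> by the coefficients of \<open>1/X'\<close> is an involution respecting
  prefixes of length \<open>m\<close>, so the count reduces to the induction hypothesis.\<close>

section \<open>Hankel dependence of power series\<close>

lemma fps_mult_nth_cong:
  fixes f g h :: "'a::comm_semiring_0 fps"
  assumes "\<forall>i\<le>l. fps_nth f i = fps_nth g i"
  shows "fps_nth (h * f) l = fps_nth (h * g) l"
  unfolding fps_mult_nth using assms by (intro sum.cong) auto

lemma fps_mult_nth_eq_0_if_low: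
  fixes f g :: "'a::comm_semiring_0 fps"
  assumes "\<forall>i\<le>N. fps_nth f i = 0" and "l \<le> N"
  shows "fps_nth (f * g) l = 0"
  unfolding fps_mult_nth using assms by (intro sum.neutral) auto

lemma fps_eq_0_if_low_and_high:
  fixes U :: "'a::zero fps"
  assumes "\<forall>i\<le>m. fps_nth U i = 0" and "\<forall>i>m. fps_nth U i = 0"
  shows "U = 0"
  using assms by (intro fps_ext) (metis fps_zero_nth not_le)

lemma fps_agree_mult_inverse:
  fixes A B P Q :: "'a::comm_ring_1 fps"
  assumes AB: "A * B = 1" and agree: "\<forall>l\<le>N. fps_nth (P * A) l = fps_nth Q l"
  shows "\<forall>l\<le>N. fps_nth (Q * B) l = fps_nth P l"
proof (intro allI impI)
  fix l assume l: "l \<le> N"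
  have "(Q - P * A) * B = Q * B - P * (A * B)" by (simp add: algebra_simps)
  then have "Q * B - P = (Q - P * A) * B" using AB by simp
  moreover have "\<forall>i\<le>N. fps_nth (Q - P * A) i = 0" using agree by simp
  ultimately have "fps_nth (Q * B - P) l = 0" using fps_mult_nth_eq_0_if_low l by metis
  then show "fps_nth (Q * B) l = fps_nth P l" by simp
qed

lemma fps_mult_shift_nth:
  fixes V W :: "'a::comm_semiring_0 fps"
  assumes "\<forall>i>k. fps_nth V i = 0" and "k \<le> l"
  shows "fps_nth (V * fps_shift p W) l = fps_nth (V * W) (l + p)"
proof -
  have "fps_nth (V * W) (l + p) = (\<Sum>i = 0..l+p. fps_nth V i * fps_nth W (l + p - i))"
    by (simp add: fps_mult_nth)
  also have "\<dots> = (\<Sum>i = 0..l. fps_nth V i * fps_nth W (l + p - i))"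
    using assms by (intro sum.mono_neutral_right) auto
  also have "\<dots> = (\<Sum>i = 0..l. fps_nth V i * fps_nth (fps_shift p W) (l - i))"
    by (intro sum.cong) auto
  finally show ?thesis by (simp add: fps_mult_nth)
qed

lemma fps_mult_X_power_nth:
  fixes U X :: "'a::comm_semiring_1 fps"
  shows "fps_nth (U * (fps_X ^ d * X)) (l + d) = fps_nth (U * X) l"
proof -
  have "U * (fps_X ^ d * X) = fps_X ^ d * (U * X)" by (simp add: algebra_simps)
  then show ?thesis by (simp add: fps_X_power_mult_nth)
qed

text \<open>The rows of \<open>H\<^sub>m\<^sub>,\<^sub>n\<close> built from the coefficients of \<open>X\<close> are linearly
  dependent: the coefficients of \<open>U\<close>, read backwards, are the dependence.\<close>
definition hankel_dependent :: "'a::field fps \<Rightarrow> nat \<Rightarrow> nat \<Rightarrow> bool" where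
  "hankel_dependent X m n \<longleftrightarrow>
     (\<exists>U. U \<noteq> 0 \<and> (\<forall>i>m. fps_nth U i = 0) \<and> (\<forall>j\<le>n. fps_nth (U * X) (m + j) = 0))"

lemma hankel_dependent_cong:
  assumes "\<forall>l\<le>m + n. fps_nth X l = fps_nth Y l"
  shows "hankel_dependent X m n \<longleftrightarrow> hankel_dependent Y m n"
proof -
  have "fps_nth (U * X) (m + j) = fps_nth (U * Y) (m + j)" if "j \<le> n" for U j
    using assms that by (intro fps_mult_nth_cong) auto
  then show ?thesis unfolding hankel_dependent_def by metis
qed

lemma hankel_dependent_zero_prefix_iff:
  fixes X :: "'a::field fps"
  assumes low: "\<forall>l<m. fps_nth X l = 0"
  shows "hankel_dependent X m n \<longleftrightarrow> (\<forall>l\<le>n. fps_nth X l = 0)"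
proof
  assume "\<forall>l\<le>n. fps_nth X l = 0"
  then have "\<forall>j\<le>n. fps_nth (fps_X ^ m * X) (m + j) = 0" by (simp add: fps_X_power_mult_nth)
  then show "hankel_dependent X m n" unfolding hankel_dependent_def
    by (intro exI[of _ "fps_X ^ m"]) simp
next
  assume "hankel_dependent X m n"
  then obtain U where U0: "U \<noteq> 0" and Udeg: "\<forall>i>m. fps_nth U i = 0"
    and Uwin: "\<forall>j\<le>n. fps_nth (U * X) (m + j) = 0" unfolding hankel_dependent_def by blast
  show "\<forall>l\<le>n. fps_nth X l = 0"
  proof (rule ccontr)
    assume "\<not> (\<forall>l\<le>n. fps_nth X l = 0)"
    then obtain l where "l \<le> n" "fps_nth X l \<noteq> 0" by blast
    then have X0: "X \<noteq> 0" and sX: "subdegree X \<le> n"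
      using subdegree_leI[of X l] by auto
    have "m \<le> subdegree X" using low X0 by (auto intro: subdegree_geI)
    moreover have sU: "subdegree U \<le> m" using U0 Udeg by (metis not_le nth_subdegree_nonzero)
    ultimately have "fps_nth (U * X) (m + (subdegree U + subdegree X - m)) \<noteq> 0"
      using U0 X0 by simp
    moreover have "subdegree U + subdegree X - m \<le> n" using sX sU by linarith
    ultimately show False using Uwin by blast
  qed
qed

text \<open>A dependence \<open>U\<close> for \<open>z\<^sup>d X'\<close> says \<open>U X' \<equiv> V (mod z\<^bsup>m+n-d+1\<^esup>)\<close> with
  \<open>deg V < m - d\<close>; multiplying by \<open>W = 1/X'\<close> (\<open>fps_agree_mult_inverse\<close>) turns this into
  \<open>V W \<equiv> U\<close>, i.e. \<open>V\<close> kills the coefficients \<open>m + 1, \<dots>, m + n - d\<close> of \<open>V W\<close>, which is a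
  Hankel window of \<open>fps_shift (d + 2) W\<close>.\<close>

lemma hankel_dependent_reduce_forward:
  fixes X' W :: "'a::field fps"
  assumes X'W: "X' * W = 1" and dm: "d < m" and mn: "m \<le> n"
    and dep: "hankel_dependent (fps_X ^ d * X') m n"
  shows "hankel_dependent (fps_shift (d + 2) W) (m - d - 1) (n - d - 1)"
proof -
  obtain U where U0: "U \<noteq> 0" and Udeg: "\<forall>i>m. fps_nth U i = 0"
    and Uwin: "\<forall>j\<le>n. fps_nth (U * (fps_X ^ d * X')) (m + j) = 0"
    using dep unfolding hankel_dependent_def by blast
  define V where "V = fps_cutoff (m - d) (U * X')"
  have Vdeg: "\<forall>i>m - d - 1. fps_nth V i = 0" by (auto simp: V_def)
  have "\<forall>l\<le>m + n - d. fps_nth (U * X') l = fps_nth V l"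
  proof (intro allI impI)
    fix l assume l: "l \<le> m + n - d"
    show "fps_nth (U * X') l = fps_nth V l"
    proof (cases "l < m - d")
      case False
      then have "fps_nth (U * X') l = fps_nth (U * (fps_X ^ d * X')) (m + (l + d - m))"
        using fps_mult_X_power_nth[of U d X' l] by simp
      also have "\<dots> = 0" using Uwin[rule_format, of "l + d - m"] l dm by simp
      finally show ?thesis using False by (simp add: V_def)
    qed (simp add: V_def)
  qed
  then have VW: "\<forall>l\<le>m + n - d. fps_nth (V * W) l = fps_nth U l"
    by (rule fps_agree_mult_inverse[OF X'W])
  have "V \<noteq> 0"
  proof
    assume "V = 0"
    then have "\<forall>l\<le>m. fps_nth U l = 0" using VW dm mn by simp
    then show False using U0 Udeg fps_eq_0_if_low_and_high by blast
  qed
  moreover have "\<forall>j\<le>n - d - 1. fps_nth (V * fps_shift (d + 2) W) (m - d - 1 + j) = 0"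
  proof (intro allI impI)
    fix j assume j: "j \<le> n - d - 1"
    have "fps_nth (V * fps_shift (d + 2) W) (m - d - 1 + j) = fps_nth (V * W) (m + 1 + j)"
      using fps_mult_shift_nth[OF Vdeg, of "m - d - 1 + j" "d + 2" W] dm by simp
    also have "\<dots> = 0" using VW[rule_format, of "m + 1 + j"] Udeg j dm mn by simp
    finally show "fps_nth (V * fps_shift (d + 2) W) (m - d - 1 + j) = 0" .
  qed
  ultimately show ?thesis unfolding hankel_dependent_def using Vdeg by blast
qed

lemma hankel_dependent_reduce_backward:
  fixes X' W :: "'a::field fps"
  assumes X'W: "X' * W = 1" and dm: "d < m" and mn: "m \<le> n"
    and dep: "hankel_dependent (fps_shift (d + 2) W) (m - d - 1) (n - d - 1)"
  shows "hankel_dependent (fps_X ^ d * X') m n"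
proof -
  obtain V where V0: "V \<noteq> 0" and Vdeg: "\<forall>i>m - d - 1. fps_nth V i = 0"
    and Vwin: "\<forall>j\<le>n - d - 1. fps_nth (V * fps_shift (d + 2) W) (m - d - 1 + j) = 0"
    using dep unfolding hankel_dependent_def by blast
  define U where "U = fps_cutoff (m + 1) (V * W)"
  have Udeg: "\<forall>i>m. fps_nth U i = 0" by (simp add: U_def)
  have "\<forall>l\<le>m + n - d. fps_nth (V * W) l = fps_nth U l"
  proof (intro allI impI)
    fix l assume l: "l \<le> m + n - d"
    show "fps_nth (V * W) l = fps_nth U l"
    proof (cases "l \<le> m")
      case False
      have e: "m - d - 1 + (l - m - 1) + (d + 2) = l" using False dm by linarith
      have "fps_nth (V * W) l = fps_nth (V * fps_shift (d + 2) W) (m - d - 1 + (l - m - 1))"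
        using fps_mult_shift_nth[OF Vdeg le_add1[of "m - d - 1" "l - m - 1"], where p = "d + 2"] unfolding e
        by (rule sym)
      also have "\<dots> = 0" using Vwin[rule_format, of "l - m - 1"] l False by simp
      finally show ?thesis using False by (simp add: U_def)
    qed (simp add: U_def)
  qed
  then have UX: "\<forall>l\<le>m + n - d. fps_nth (U * X') l = fps_nth V l"
    using fps_agree_mult_inverse[of W X'] X'W by (simp add: mult.commute)
  have "U \<noteq> 0"
  proof
    assume "U = 0"
    then have "\<forall>l\<le>m - d - 1. fps_nth V l = 0" using UX dm mn by simp
    then show False using V0 Vdeg fps_eq_0_if_low_and_high by blast
  qed
  moreover have "\<forall>j\<le>n. fps_nth (U * (fps_X ^ d * X')) (m + j) = 0"
  proof (intro allI impI)
    fix j assume j: "j \<le> n"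
    have "fps_nth (U * (fps_X ^ d * X')) (m + j) = fps_nth (U * X') (m + j - d)"
      using fps_mult_X_power_nth[of U d X' "m + j - d"] dm by simp
    also have "\<dots> = 0" using UX Vdeg j dm by simp
    finally show "fps_nth (U * (fps_X ^ d * X')) (m + j) = 0" .
  qed
  ultimately show ?thesis unfolding hankel_dependent_def using Udeg by blast
qed

lemma hankel_dependent_X_power_mult_iff:
  fixes X' :: "'a::field fps"
  assumes "fps_nth X' 0 \<noteq> 0" and "d < m" and "m \<le> n"
  shows "hankel_dependent (fps_X ^ d * X') m n
     \<longleftrightarrow> hankel_dependent (fps_shift (d + 2) (inverse X')) (m - d - 1) (n - d - 1)"
  using hankel_dependent_reduce_forward hankel_dependent_reduce_backward
    inverse_mult_eq_1'[OF assms(1)] assms(2,3) by blast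

section \<open>Lists as truncated power series\<close>

definition fps_of_list :: "'a::zero list \<Rightarrow> 'a fps" where
  "fps_of_list x = Abs_fps (\<lambda>l. if l < length x then x ! l else 0)"

lemma fps_of_list_nth [simp]: "fps_nth (fps_of_list x) l = (if l < length x then x ! l else 0)"
  by (simp add: fps_of_list_def)

lemma fps_inverse_nth_cong:
  fixes f g :: "'a::field fps"
  assumes f0: "fps_nth f 0 \<noteq> 0" and g0: "fps_nth g 0 \<noteq> 0"
    and agree: "\<forall>i\<le>l. fps_nth f i = fps_nth g i"
  shows "fps_nth (inverse f) l = fps_nth (inverse g) l"
proof -
  have "\<forall>i\<le>l. fps_nth (inverse g * f) i = fps_nth 1 i"
    using fps_mult_nth_cong[of _ f g "inverse g"] agree inverse_mult_eq_1[OF g0] by simp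
  then have "\<forall>i\<le>l. fps_nth (1 * inverse f) i = fps_nth (inverse g) i"
    by (rule fps_agree_mult_inverse[OF inverse_mult_eq_1'[OF f0]])
  then show ?thesis by simp
qed

definition inverse_list :: "'a::field list \<Rightarrow> 'a list" where
  "inverse_list z = map (fps_nth (inverse (fps_of_list z))) [0..<length z]"

lemma length_inverse_list [simp]: "length (inverse_list z) = length z"
  by (simp add: inverse_list_def)

lemma nth_inverse_list:
  "l < length z \<Longrightarrow> inverse_list z ! l = fps_nth (inverse (fps_of_list z)) l"
  by (simp add: inverse_list_def)

lemma inverse_list_inverse_list:
  fixes z :: "'a::field list"
  assumes "z \<noteq> []" and "z ! 0 \<noteq> 0"
  shows "inverse_list (inverse_list z) = z"
proof (rule nth_equalityI)
  fix l assume "l < length (inverse_list (inverse_list z))"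
  then have l: "l < length z" by simp
  have z0: "fps_nth (fps_of_list z) 0 \<noteq> 0" using assms by simp
  then have "fps_nth (fps_of_list (inverse_list z)) 0 \<noteq> 0"
    using assms by (simp add: nth_inverse_list)
  then have "fps_nth (inverse (fps_of_list (inverse_list z))) l
      = fps_nth (inverse (inverse (fps_of_list z))) l"
    using l z0 by (intro fps_inverse_nth_cong) (auto simp: nth_inverse_list)
  then show "inverse_list (inverse_list z) ! l = z ! l"
    using z0 l by (simp add: nth_inverse_list)
qed simp

lemma take_inverse_list:
  fixes z :: "'a::field list"
  assumes "z \<noteq> []" and "z ! 0 \<noteq> 0"
  shows "take j (inverse_list z) = inverse_list (take j z)"
proof (cases "j = 0")
  case False
  show ?thesis
  proof (rule nth_equalityI)
    fix l assume "l < length (take j (inverse_list z))"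
    then have l: "l < j" "l < length z" by auto
    have "fps_nth (inverse (fps_of_list z)) l = fps_nth (inverse (fps_of_list (take j z))) l"
      using assms False l by (intro fps_inverse_nth_cong) auto
    then show "take j (inverse_list z) ! l = inverse_list (take j z) ! l"
      using l by (simp add: nth_inverse_list)
  qed simp
qed (simp add: inverse_list_def)

definition invert_tail :: "nat \<Rightarrow> 'a::field list \<Rightarrow> 'a list" where
  "invert_tail d x = take d x @ inverse_list (drop d x)"

lemma length_invert_tail [simp]: "length (invert_tail d x) = length x"
  by (simp add: invert_tail_def)

lemma nth_invert_tail:
  "d + l < length x \<Longrightarrow> invert_tail d x ! (d + l) = fps_nth (inverse (fps_of_list (drop d x))) l"
  by (simp add: invert_tail_def nth_append nth_inverse_list)

lemma invert_tail_invert_tail: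
  assumes "d < length x" and "x ! d \<noteq> 0"
  shows "invert_tail d (invert_tail d x) = x"
  using assms by (simp add: invert_tail_def inverse_list_inverse_list)

lemma take_invert_tail:
  assumes "d < m" and "d < length x" and "x ! d \<noteq> 0"
  shows "take m (invert_tail d x) = invert_tail d (take m x)"
  using assms take_inverse_list[of "drop d x" "m - d"]
  by (simp add: invert_tail_def drop_take min_absorb1)

lemma hankel_dependent_invert_tail:
  fixes x :: "'a::field list"
  assumes len: "length x = m + n + 1" and dm: "d < m" and mn: "m \<le> n"
    and low: "\<forall>i<d. x ! i = 0" and xd: "x ! d \<noteq> 0"
  shows "hankel_dependent (fps_of_list x) m n
     \<longleftrightarrow> hankel_dependent (fps_of_list (drop (2 * d + 2) (invert_tail d x))) (m - d - 1) (n - d - 1)"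
proof -
  let ?X' = "fps_of_list (drop d x)"
  have "fps_of_list x = fps_X ^ d * ?X'"
    using low len dm mn by (intro fps_ext) (auto simp: fps_X_power_mult_nth)
  moreover have "fps_nth ?X' 0 \<noteq> 0" using xd len dm mn by simp
  ultimately have "hankel_dependent (fps_of_list x) m n
      \<longleftrightarrow> hankel_dependent (fps_shift (d + 2) (inverse ?X')) (m - d - 1) (n - d - 1)"
    using hankel_dependent_X_power_mult_iff dm mn by metis
  also have "\<dots> \<longleftrightarrow> hankel_dependent (fps_of_list (drop (2 * d + 2) (invert_tail d x)))
      (m - d - 1) (n - d - 1)"
  proof (rule hankel_dependent_cong, intro allI impI)
    fix l assume l: "l \<le> m - d - 1 + (n - d - 1)"
    have idx: "2 * d + 2 + l = d + (d + 2 + l)" by simp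
    have "fps_nth (fps_of_list (drop (2 * d + 2) (invert_tail d x))) l = invert_tail d x ! (2 * d + 2 + l)"
      using l len dm mn by simp
    also have "\<dots> = fps_nth (inverse ?X') (d + 2 + l)"
      unfolding idx using l len dm mn by (intro nth_invert_tail) simp
    finally show "fps_nth (fps_shift (d + 2) (inverse ?X')) l
        = fps_nth (fps_of_list (drop (2 * d + 2) (invert_tail d x))) l"
      by (simp add: add.commute)
  qed
  finally show ?thesis .
qed

section \<open>Counting lists with a prescribed prefix\<close>

lemma finite_lists_length_eq_UNIV: "finite {x :: 'a::finite list. length x = L}"
  using finite_lists_length_eq[of "UNIV :: 'a set" L] by simp

lemma card_lists_length_eq_UNIV:
  "card {x :: 'a::finite list. length x = L} = card (UNIV :: 'a set) ^ L"
  using card_lists_length_eq[of "UNIV :: 'a set" L] by simp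

lemma card_lists_with_prefix:
  assumes "length b = j" and "j \<le> L"
  shows "card {z :: 'a::finite list. length z = L \<and> take j z = b} = card (UNIV :: 'a set) ^ (L - j)"
proof -
  have "{z :: 'a list. length z = L \<and> take j z = b} = (\<lambda>v. b @ v) ` {v. length v = L - j}"
  proof (rule Set.set_eqI, rule iffI)
    fix z assume "z \<in> {z :: 'a list. length z = L \<and> take j z = b}"
    then have "z = b @ drop j z" and "length (drop j z) = L - j"
      by (metis (mono_tags) append_take_drop_id mem_Collect_eq, simp)
    then show "z \<in> (\<lambda>v. b @ v) ` {v. length v = L - j}" by blast
  qed (use assms in auto)
  moreover have "inj_on (\<lambda>v. b @ v) {v. length v = L - j}" by (rule inj_onI) simp
  ultimately show ?thesis by (simp add: card_image card_lists_length_eq_UNIV)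
qed

lemma card_lists_with_prefix_drop_le:
  assumes "length b = j" and "j \<le> p" and "p \<le> L"
  shows "card {z :: 'a::finite list. length z = L \<and> take j z = b \<and> R (drop p z)}
       = card (UNIV :: 'a set) ^ (p - j) * card {y. length y = L - p \<and> R y}"
proof -
  let ?A = "{u :: 'a list. length u = p \<and> take j u = b}"
  let ?B = "{y :: 'a list. length y = L - p \<and> R y}"
  have "{z :: 'a list. length z = L \<and> take j z = b \<and> R (drop p z)} = (\<lambda>(u, y). u @ y) ` (?A \<times> ?B)"
  proof (rule Set.set_eqI, rule iffI)
    fix z assume z: "z \<in> {z :: 'a list. length z = L \<and> take j z = b \<and> R (drop p z)}"
    then have "(take p z, drop p z) \<in> ?A \<times> ?B" using assms by (simp add: min_absorb1)
    moreover have "z = (\<lambda>(u, y). u @ y) (take p z, drop p z)" by simp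
    ultimately show "z \<in> (\<lambda>(u, y). u @ y) ` (?A \<times> ?B)" by blast
  next
    fix z assume "z \<in> (\<lambda>(u, y). u @ y) ` (?A \<times> ?B)"
    then obtain w where w: "w \<in> ?A \<times> ?B" "z = (\<lambda>(u, y). u @ y) w" by (rule imageE)
    obtain u y where "w = (u, y)" by (cases w)
    then have "z = u @ y" "u \<in> ?A" "y \<in> ?B" using w by auto
    then show "z \<in> {z :: 'a list. length z = L \<and> take j z = b \<and> R (drop p z)}"
      using assms by simp
  qed
  moreover have "inj_on (\<lambda>(u, y). u @ y) (?A \<times> ?B)"
  proof (rule inj_onI)
    fix w1 w2 assume "w1 \<in> ?A \<times> ?B" "w2 \<in> ?A \<times> ?B" "(\<lambda>(u, y). u @ y) w1 = (\<lambda>(u, y). u @ y) w2"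
    then show "w1 = w2" by (cases w1, cases w2) simp
  qed
  moreover have "finite ?A" by (rule finite_subset[OF _ finite_lists_length_eq_UNIV[of p]]) blast
  moreover have "finite ?B" by (rule finite_subset[OF _ finite_lists_length_eq_UNIV[of "L - p"]]) blast
  moreover have "card ?A = card (UNIV :: 'a set) ^ (p - j)" by (rule card_lists_with_prefix[OF assms(1,2)])
  ultimately show ?thesis by (simp add: card_image card_cartesian_product)
qed

lemma card_lists_with_prefix_drop_ge:
  assumes "length b = j" and "p \<le> j" and "j \<le> L"
  shows "card {z :: 'a list. length z = L \<and> take j z = b \<and> R (drop p z)}
       = card {y. length y = L - p \<and> take (j - p) y = drop p b \<and> R y}"
proof -
  let ?B = "{y :: 'a list. length y = L - p \<and> take (j - p) y = drop p b \<and> R y}"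
  have "{z :: 'a list. length z = L \<and> take j z = b \<and> R (drop p z)} = (\<lambda>y. take p b @ y) ` ?B"
  proof (rule Set.set_eqI, rule iffI)
    fix z assume z: "z \<in> {z :: 'a list. length z = L \<and> take j z = b \<and> R (drop p z)}"
    then have "take p z = take p b" and "take (j - p) (drop p z) = drop p b"
      using assms by (metis (mono_tags) mem_Collect_eq min.absorb1 take_take,
                      metis (mono_tags) mem_Collect_eq drop_take)
    then have "z = take p b @ drop p z" and "drop p z \<in> ?B"
      using z assms by (metis append_take_drop_id, simp)
    then show "z \<in> (\<lambda>y. take p b @ y) ` ?B" by blast
  next
    fix z assume "z \<in> (\<lambda>y. take p b @ y) ` ?B"
    then obtain y where y: "z = take p b @ y" "y \<in> ?B" by blast
    then have "take j z = take p b @ drop p b" using assms by simp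
    then show "z \<in> {z :: 'a list. length z = L \<and> take j z = b \<and> R (drop p z)}" using y assms by simp
  qed
  moreover have "inj_on (\<lambda>y. take p b @ y) ?B" by (rule inj_onI) simp
  ultimately show ?thesis by (simp add: card_image)
qed

lemma card_lists_with_prefix_sum:
  fixes T :: "'a::finite list set"
  assumes T: "T \<subseteq> {x. length x = N}" and km: "k \<le> m" "m \<le> N" and a: "length a = k"
    and c: "\<And>b. length b = m \<Longrightarrow> card {x\<in>T. take m x = b} = c"
  shows "card {x\<in>T. take k x = a} = card (UNIV :: 'a set) ^ (m - k) * c"
proof -
  let ?B = "{b :: 'a list. length b = m \<and> take k b = a}"
  have "{x\<in>T. take k x = a} = (\<Union>b\<in>?B. {x\<in>T. take m x = b})"
    using T km by (auto simp: min_absorb1) (metis min.absorb1 take_take)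
  moreover have "finite ?B" by (rule finite_subset[OF _ finite_lists_length_eq_UNIV[of m]]) blast
  moreover have "finite T" using finite_subset[OF T finite_lists_length_eq_UNIV] .
  ultimately have "card {x\<in>T. take k x = a} = (\<Sum>b\<in>?B. card {x\<in>T. take m x = b})"
    by (simp only:) (rule card_UN_disjoint, auto)
  also have "\<dots> = card ?B * c" using c by simp
  finally show ?thesis using card_lists_with_prefix[OF a km(1)] by simp
qed

section \<open>Rank of Hankel matrices\<close>

lemma (in vec_space) scalar_prod_span_eq_0:
  fixes S :: "'a vec set"
  assumes S: "S \<subseteq> carrier_vec n" and orth: "\<forall>s\<in>S. s \<bullet> c = 0"
    and w: "w \<in> span S" and c: "c \<in> carrier_vec n"
  shows "w \<bullet> c = 0"
proof -
  obtain a A where A: "w = lincomb a A" "finite A" "A \<subseteq> S"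
    using w unfolding span_def by blast
  have AC: "A \<subseteq> carrier_vec n" using A S by auto
  have "w \<bullet> c = (\<Sum>i\<in>{0..<n}. (\<Sum>x\<in>A. a x * x $ i) * c $ i)"
    using A(1) c lincomb_index[OF _ AC] by (simp add: scalar_prod_def)
  also have "\<dots> = (\<Sum>x\<in>A. a x * (x \<bullet> c))"
    using c by (simp add: scalar_prod_def sum_distrib_left sum_distrib_right mult.assoc sum.swap[of _ A])
  also have "\<dots> = 0" using orth A(3) by (intro sum.neutral) auto
  finally show ?thesis .
qed

text \<open>Put the vectors of \<open>S\<close> as rows of a square matrix, padded with zero rows; it is
  singular, and a kernel vector is orthogonal to \<open>S\<close>.\<close>
lemma (in vec_space) exists_orthogonal_vec:
  fixes S :: "'a vec set"
  assumes SC: "S \<subseteq> carrier_vec n" and finS: "finite S" and cS: "card S < n"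
  shows "\<exists>v\<in>carrier_vec n. v \<noteq> 0\<^sub>v n \<and> (\<forall>s\<in>S. s \<bullet> v = 0)"
proof -
  obtain sl where sl: "set sl = S" "distinct sl" using finite_distinct_list[OF finS] by blast
  have lsl: "length sl = card S" using sl distinct_card by fastforce
  define f where "f = (\<lambda>i. if i < length sl then sl ! i else 0\<^sub>v n)"
  define B where "B = mat\<^sub>r n n (\<lambda>i. if i = n - 1 then 0\<^sub>v n else f i)"
  have fC: "f \<in> {0..<n} \<rightarrow> carrier_vec n" unfolding f_def using sl SC nth_mem by fastforce
  have BC: "B \<in> carrier_mat n n" unfolding B_def by simp
  have "det B = 0" unfolding B_def using cS by (intro det_row_0 fC) auto
  then obtain v where v: "v \<in> carrier_vec n" "v \<noteq> 0\<^sub>v n" "B *\<^sub>v v = 0\<^sub>v n"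
    using BC det_0_iff_vec_prod_zero_field by blast
  have "s \<bullet> v = 0" if "s \<in> S" for s
  proof -
    obtain i where i: "i < length sl" "s = sl ! i" using \<open>s \<in> S\<close> sl by (metis in_set_conv_nth)
    have ilt: "i < n" "i \<noteq> n - 1" using i lsl cS by auto
    have sC: "s \<in> carrier_vec n" using \<open>s \<in> S\<close> SC by blast
    have "row B i = s" unfolding B_def using ilt i sC by (simp add: f_def)
    then have "(B *\<^sub>v v) $ i = s \<bullet> v" using ilt BC by simp
    then show "s \<bullet> v = 0" using v(3) ilt by simp
  qed
  then show ?thesis using v by blast
qed

lemma (in vec_space) rank_less_dim_row_iff:
  assumes A: "A \<in> carrier_mat n nc"
  shows "rank A < n \<longleftrightarrow> (\<exists>c\<in>carrier_vec n. c \<noteq> 0\<^sub>v n \<and> (\<forall>w\<in>set (cols A). w \<bullet> c = 0))"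
proof -
  obtain S where max: "maximal S (\<lambda>T. T \<subseteq> set (cols A) \<and> lin_indpt T)"
    using maximal_exists[of "(\<lambda>T. T \<subseteq> set (cols A) \<and> lin_indpt T)" "card (set (cols A))" "{}"]
    by (meson List.finite_set card_mono empty_iff empty_subsetI finite_lin_indpt2 rev_finite_subset)
  have rk: "rank A = card S" using rank_card_indpt[OF A max] .
  have colsC: "set (cols A) \<subseteq> carrier_vec n" using A cols_dim by blast
  have Scols: "S \<subseteq> set (cols A)" and li: "lin_indpt S" using max unfolding maximal_def by auto
  have SC: "S \<subseteq> carrier_vec n" using Scols colsC by blast
  have finS: "finite S" using Scols finite_subset by blast
  have span_cols: "w \<in> span S" if w: "w \<in> set (cols A)" for w
  proof (cases "w \<in> S")
    case True
    then show ?thesis using in_own_span[OF SC] by blast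
  next
    case False
    have "S \<union> {w} \<subseteq> set (cols A)" and "S \<union> {w} \<noteq> S" using Scols w False by auto
    then have "lin_dep (S \<union> {w})" using max unfolding maximal_def by blast
    moreover have "w \<in> carrier_vec n" using w colsC by blast
    ultimately show ?thesis using lin_dep_iff_in_span[OF SC li _ False] by simp
  qed
  show ?thesis
  proof
    assume "rank A < n"
    then obtain v where v: "v \<in> carrier_vec n" "v \<noteq> 0\<^sub>v n" "\<forall>s\<in>S. s \<bullet> v = 0"
      using exists_orthogonal_vec[OF SC finS] rk by auto
    have "w \<bullet> v = 0" if "w \<in> set (cols A)" for w
      using scalar_prod_span_eq_0[OF SC v(3) span_cols[OF that] v(1)] .
    then show "\<exists>c\<in>carrier_vec n. c \<noteq> 0\<^sub>v n \<and> (\<forall>w\<in>set (cols A). w \<bullet> c = 0)"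
      using v by blast
  next
    assume "\<exists>c\<in>carrier_vec n. c \<noteq> 0\<^sub>v n \<and> (\<forall>w\<in>set (cols A). w \<bullet> c = 0)"
    then obtain c where c: "c \<in> carrier_vec n" "c \<noteq> 0\<^sub>v n" "\<forall>w\<in>set (cols A). w \<bullet> c = 0"
      by blast
    obtain i where i: "i < n" "c $ i \<noteq> 0" using c(1,2)
      by (metis carrier_vecD eq_vecI index_zero_vec(1) index_zero_vec(2))
    show "rank A < n"
    proof (rule ccontr)
      assume "\<not> rank A < n"
      then have "card S \<ge> dim" using rk dim_is_n by simp
      then have "basis S" using dim_li_is_basis[OF fin_dim finS _ li] SC by simp
      then have "unit_vec n i \<in> span S" unfolding basis_def by simp
      then have "unit_vec n i \<bullet> c = 0"
        using scalar_prod_span_eq_0[OF SC _ _ c(1)] c(3) Scols by blast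
      then show False using c(1) i by simp
    qed
  qed
qed

lemma hankel_cols_orthogonal_iff:
  assumes c: "c \<in> carrier_vec (m + 1)"
  shows "(\<forall>w\<in>set (cols (hankel m n x)). w \<bullet> c = 0)
     \<longleftrightarrow> (\<forall>j\<le>n. (\<Sum>i=0..m. x ! (i + j) * c $ i) = 0)"
proof -
  let ?H = "hankel m n x"
  have col: "col ?H j \<bullet> c = (\<Sum>i=0..m. x ! (i + j) * c $ i)" if "j \<le> n" for j
  proof -
    have "col ?H j \<bullet> c = (\<Sum>i\<in>{0..<m + 1}. x ! (i + j) * c $ i)"
      using c that unfolding scalar_prod_def by (intro sum.cong) (auto simp: hankel_def)
    also have "{0..<m + 1} = {0..m}" by auto
    finally show ?thesis .
  qed
  have "dim_col ?H = n + 1" by (simp add: hankel_def)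
  then have "set (cols ?H) = {col ?H j | j. j < n + 1}"
    unfolding set_conv_nth by (auto simp: cols_nth) (metis cols_nth lessI less_Suc_eq)
  then show ?thesis using col by (auto simp: less_Suc_eq_le)
qed

lemma fps_mult_fps_of_list_nth:
  fixes U :: "'a::comm_semiring_1 fps"
  assumes Udeg: "\<forall>i>m. fps_nth U i = 0" and j: "j \<le> n" and len: "length x = m + n + 1"
  shows "fps_nth (U * fps_of_list x) (m + j) = (\<Sum>i=0..m. x ! (i + j) * fps_nth U (m - i))"
proof -
  have "fps_nth (U * fps_of_list x) (m + j) = (\<Sum>i=0..m. fps_nth U i * fps_nth (fps_of_list x) (m + j - i))"
    unfolding fps_mult_nth using Udeg by (intro sum.mono_neutral_right) auto
  also have "\<dots> = (\<Sum>i=0..m. fps_nth U i * x ! (m + j - i))"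
    using j len by (intro sum.cong) auto
  also have "\<dots> = (\<Sum>i=0..m. fps_nth U (m - i) * x ! (m + j - (m - i)))"
    by (rule sum.atLeastAtMost_rev[of _ 0 m, simplified])
  also have "\<dots> = (\<Sum>i=0..m. x ! (i + j) * fps_nth U (m - i))"
    by (intro sum.cong) (auto simp: mult.commute add.commute)
  finally show ?thesis .
qed

lemma hankel_dependent_fps_of_list_iff:
  fixes x :: "'a::field list"
  assumes len: "length x = m + n + 1"
  shows "hankel_dependent (fps_of_list x) m n
     \<longleftrightarrow> (\<exists>c\<in>carrier_vec (m + 1). c \<noteq> 0\<^sub>v (m + 1) \<and> (\<forall>j\<le>n. (\<Sum>i=0..m. x ! (i + j) * c $ i) = 0))"
proof
  assume "hankel_dependent (fps_of_list x) m n"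
  then obtain U where U0: "U \<noteq> 0" and Udeg: "\<forall>i>m. fps_nth U i = 0"
    and Uwin: "\<forall>j\<le>n. fps_nth (U * fps_of_list x) (m + j) = 0"
    unfolding hankel_dependent_def by blast
  define c where "c = vec (m + 1) (\<lambda>i. fps_nth U (m - i))"
  obtain e where e: "fps_nth U e \<noteq> 0" using U0 by (metis fps_ext fps_zero_nth)
  then have em: "e \<le> m" using Udeg by (metis not_le)
  have "c $ (m - e) = fps_nth U (m - (m - e))" by (simp add: c_def)
  also have "m - (m - e) = e" using em by simp
  finally have "c $ (m - e) \<noteq> 0" using e by simp
  then have "c \<noteq> 0\<^sub>v (m + 1)" by auto
  moreover have "(\<Sum>i=0..m. x ! (i + j) * c $ i) = 0" if "j \<le> n" for j
    using fps_mult_fps_of_list_nth[OF Udeg that len] Uwin that by (simp add: c_def)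
  ultimately show "\<exists>c\<in>carrier_vec (m + 1). c \<noteq> 0\<^sub>v (m + 1) \<and> (\<forall>j\<le>n. (\<Sum>i=0..m. x ! (i + j) * c $ i) = 0)"
    by (auto simp: c_def)
next
  assume "\<exists>c\<in>carrier_vec (m + 1). c \<noteq> 0\<^sub>v (m + 1) \<and> (\<forall>j\<le>n. (\<Sum>i=0..m. x ! (i + j) * c $ i) = 0)"
  then obtain c where c: "c \<in> carrier_vec (m + 1)" "c \<noteq> 0\<^sub>v (m + 1)"
    and crel: "\<forall>j\<le>n. (\<Sum>i=0..m. x ! (i + j) * c $ i) = 0" by blast
  define U where "U = Abs_fps (\<lambda>i. if i \<le> m then c $ (m - i) else 0)"
  have Udeg: "\<forall>i>m. fps_nth U i = 0" by (simp add: U_def)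
  obtain i where i: "i < m + 1" "c $ i \<noteq> 0" using c
    by (metis carrier_vecD eq_vecI index_zero_vec(1) index_zero_vec(2))
  then have "fps_nth U (m - i) \<noteq> 0" by (simp add: U_def)
  then have "U \<noteq> 0" by auto
  moreover have "fps_nth (U * fps_of_list x) (m + j) = 0" if "j \<le> n" for j
  proof -
    have "fps_nth (U * fps_of_list x) (m + j) = (\<Sum>i=0..m. x ! (i + j) * c $ i)"
      unfolding fps_mult_fps_of_list_nth[OF Udeg that len] by (intro sum.cong) (auto simp: U_def)
    then show ?thesis using crel that by simp
  qed
  ultimately show "hankel_dependent (fps_of_list x) m n"
    unfolding hankel_dependent_def using Udeg by blast
qed

lemma mat_rank_hankel_le_iff:
  fixes x :: "'a::field list"
  assumes "length x = m + n + 1"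
  shows "mat_rank (hankel m n x) \<le> m \<longleftrightarrow> hankel_dependent (fps_of_list x) m n"
proof -
  have H: "hankel m n x \<in> carrier_mat (m + 1) (n + 1)" by (simp add: hankel_def)
  have "mat_rank (hankel m n x) \<le> m \<longleftrightarrow> vec_space.rank (m + 1) (hankel m n x) < m + 1"
    unfolding mat_rank_def by (simp add: hankel_def less_Suc_eq_le)
  also have "\<dots> \<longleftrightarrow> (\<exists>c\<in>carrier_vec (m + 1). c \<noteq> 0\<^sub>v (m + 1)
      \<and> (\<forall>w\<in>set (cols (hankel m n x)). w \<bullet> c = 0))"
    by (rule vec_space.rank_less_dim_row_iff[OF H])
  also have "\<dots> \<longleftrightarrow> hankel_dependent (fps_of_list x) m n"
    unfolding hankel_dependent_fps_of_list_iff[OF assms]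
    using hankel_cols_orthogonal_iff[of _ m n x] by blast
  finally show ?thesis .
qed

definition hankel_extensions :: "nat \<Rightarrow> nat \<Rightarrow> 'a::field list \<Rightarrow> 'a list set" where
  "hankel_extensions m n a =
     {x. length x = m + n + 1 \<and> take (length a) x = a \<and> hankel_dependent (fps_of_list x) m n}"

lemma card_hankel_extensions_of_full:
  fixes a :: "'a::{finite, field} list"
  assumes full: "\<And>b :: 'a list. length b = m
      \<Longrightarrow> card (hankel_extensions m n b) = card (UNIV :: 'a set) ^ m"
    and a: "length a \<le> m"
  shows "card (hankel_extensions m n a) = card (UNIV :: 'a set) ^ (2 * m - length a)"
proof -
  let ?T = "{x :: 'a list. length x = m + n + 1 \<and> hankel_dependent (fps_of_list x) m n}"
  have ext: "hankel_extensions m n b = {x\<in>?T. take (length b) x = b}" for b :: "'a list"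
    by (auto simp: hankel_extensions_def)
  have "card {x\<in>?T. take m x = b} = card (UNIV :: 'a set) ^ m" if "length b = m" for b :: "'a list"
    using full[OF that] ext[of b] that by simp
  then have "card {x\<in>?T. take (length a) x = a}
      = card (UNIV :: 'a set) ^ (m - length a) * card (UNIV :: 'a set) ^ m"
    using a by (intro card_lists_with_prefix_sum[where N = "m + n + 1"]) auto
  moreover have "m - length a + m = 2 * m - length a" using a by simp
  ultimately show ?thesis by (simp add: ext power_add[symmetric])
qed

lemma card_hankel_extensions_zero_prefix:
  fixes b :: "'a::{finite, field} list"
  assumes b: "length b = m" and mn: "m \<le> n" and zero: "\<forall>i<m. b ! i = 0"
  shows "card (hankel_extensions m n b) = card (UNIV :: 'a set) ^ m"
proof -
  have "hankel_extensions m n b = {x. length x = m + n + 1 \<and> take (n + 1) x = replicate (n + 1) 0}"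
  proof (rule Set.set_eqI)
    fix x :: "'a list"
    show "x \<in> hankel_extensions m n b
        \<longleftrightarrow> x \<in> {x. length x = m + n + 1 \<and> take (n + 1) x = replicate (n + 1) 0}"
    proof (cases "length x = m + n + 1")
      case True
      have "take m x = b \<longleftrightarrow> (\<forall>l<m. x ! l = 0)"
        using b zero True by (auto simp: list_eq_iff_nth_eq)
      moreover have "take (n + 1) x = replicate (n + 1) 0 \<longleftrightarrow> (\<forall>l\<le>n. x ! l = 0)"
        using True by (auto simp: list_eq_iff_nth_eq less_Suc_eq_le nth_replicate simp del: replicate.simps)
      moreover have "hankel_dependent (fps_of_list x) m n \<longleftrightarrow> (\<forall>l\<le>n. x ! l = 0)"
        if "\<forall>l<m. x ! l = 0"
        using hankel_dependent_zero_prefix_iff[of m "fps_of_list x" n] that True by simp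
      ultimately show ?thesis using True b mn by (auto simp: hankel_extensions_def)
    qed (auto simp: hankel_extensions_def)
  qed
  also have "card \<dots> = card (UNIV :: 'a set) ^ (m + n + 1 - (n + 1))"
    by (rule card_lists_with_prefix) auto
  finally show ?thesis by simp
qed

lemma bij_betw_invert_tail_hankel_extensions:
  fixes b :: "'a::field list"
  assumes b: "length b = m" and mn: "m \<le> n" and d: "d < m" "b ! d \<noteq> 0"
    and low: "\<forall>i<d. b ! i = 0"
  shows "bij_betw (invert_tail d) (hankel_extensions m n b)
    {z. length z = m + n + 1 \<and> take m z = invert_tail d b
        \<and> hankel_dependent (fps_of_list (drop (2 * d + 2) z)) (m - d - 1) (n - d - 1)}"
    (is "bij_betw _ _ ?S")
proof -
  let ?N = "m + n + 1"
  have ext: "x \<in> hankel_extensions m n b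
      \<longleftrightarrow> length x = ?N \<and> take m x = b \<and> hankel_dependent (fps_of_list x) m n" for x
    using b by (simp add: hankel_extensions_def)
  have prefix_b: "x ! d \<noteq> 0 \<and> (hankel_dependent (fps_of_list x) m n
      \<longleftrightarrow> hankel_dependent (fps_of_list (drop (2 * d + 2) (invert_tail d x))) (m - d - 1) (n - d - 1))"
    if x: "length x = ?N" "take m x = b" for x
  proof -
    have "x ! i = b ! i" if "i < m" for i using x that by (metis nth_take)
    then show ?thesis using hankel_dependent_invert_tail[OF x(1) d(1) mn] low d by simp
  qed
  have prefix_inv: "z ! d \<noteq> 0 \<and> take m (invert_tail d z) = b"
    if z: "length z = ?N" "take m z = invert_tail d b" for z
  proof -
    have "z ! d = invert_tail d b ! (d + 0)" using z d by (metis add_0_right nth_take)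
    also have "\<dots> = inverse (b ! d)" using nth_invert_tail[of d 0 b] b d by simp
    finally have zd: "z ! d \<noteq> 0" using d by simp
    then have "take m (invert_tail d z) = invert_tail d (invert_tail d b)"
      using take_invert_tail[of d m z] z d by simp
    then show ?thesis using zd invert_tail_invert_tail[of d b] b d by simp
  qed
  show ?thesis
  proof (rule bij_betw_byWitness[where f' = "invert_tail d"])
    show "\<forall>x\<in>hankel_extensions m n b. invert_tail d (invert_tail d x) = x"
    proof
      fix x assume "x \<in> hankel_extensions m n b"
      then have x: "length x = ?N" "take m x = b" by (auto simp: ext)
      then show "invert_tail d (invert_tail d x) = x"
        using prefix_b[OF x] invert_tail_invert_tail[of d x] d by simp
    qed
    show "\<forall>z\<in>?S. invert_tail d (invert_tail d z) = z"
    proof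
      fix z assume "z \<in> ?S"
      then have z: "length z = ?N" "take m z = invert_tail d b" by auto
      then show "invert_tail d (invert_tail d z) = z"
        using prefix_inv[OF z] invert_tail_invert_tail[of d z] d by simp
    qed
    show "invert_tail d ` hankel_extensions m n b \<subseteq> ?S"
    proof
      fix z assume "z \<in> invert_tail d ` hankel_extensions m n b"
      then obtain x where x: "length x = ?N" "take m x = b" "hankel_dependent (fps_of_list x) m n"
        and z: "z = invert_tail d x" by (auto simp: ext)
      then have "take m z = invert_tail d b"
        using prefix_b[OF x(1,2)] take_invert_tail[of d m x] d by simp
      then show "z \<in> ?S" using x z prefix_b[OF x(1,2)] by simp
    qed
    show "invert_tail d ` ?S \<subseteq> hankel_extensions m n b"
    proof
      fix x assume "x \<in> invert_tail d ` ?S"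
      then obtain z where z: "z \<in> ?S" and x: "x = invert_tail d z" by blast
      then have zN: "length z = ?N" "take m z = invert_tail d b" by auto
      then have "length x = ?N" "take m x = b" and "invert_tail d x = z"
        using prefix_inv[OF zN] invert_tail_invert_tail[of d z] x d by auto
      then show "x \<in> hankel_extensions m n b" using prefix_b z by (auto simp: ext)
    qed
  qed
qed

lemma card_hankel_extensions_nonzero_prefix:
  fixes b :: "'a::{finite, field} list"
  assumes b: "length b = m" and mn: "m \<le> n" and d: "d < m" "b ! d \<noteq> 0"
    and low: "\<forall>i<d. b ! i = 0"
    and smaller: "\<And>a :: 'a list. length a \<le> m - d - 1
      \<Longrightarrow> card (hankel_extensions (m - d - 1) (n - d - 1) a)
        = card (UNIV :: 'a set) ^ (2 * (m - d - 1) - length a)"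
  shows "card (hankel_extensions m n b) = card (UNIV :: 'a set) ^ m"
proof -
  let ?q = "card (UNIV :: 'a set)" and ?p = "2 * d + 2"
  define R where "R y \<longleftrightarrow> hankel_dependent (fps_of_list y) (m - d - 1) (n - d - 1)" for y :: "'a list"
  let ?S = "{z. length z = m + n + 1 \<and> take m z = invert_tail d b \<and> R (drop ?p z)}"
  have "card (hankel_extensions m n b) = card ?S"
    using bij_betw_same_card[OF bij_betw_invert_tail_hankel_extensions[OF b mn d low]]
    by (simp add: R_def)
  moreover have N: "m + n + 1 - ?p = (m - d - 1) + (n - d - 1) + 1" using d mn by simp
  moreover have lib: "length (invert_tail d b) = m" using b by simp
  moreover have "card ?S = ?q ^ m"
  proof (cases "m \<le> ?p")
    case True
    have "card ?S = ?q ^ (?p - m) * card {y. length y = m + n + 1 - ?p \<and> R y}"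
      by (rule card_lists_with_prefix_drop_le[OF lib True]) (use d mn in simp)
    also have "{y. length y = m + n + 1 - ?p \<and> R y} = hankel_extensions (m - d - 1) (n - d - 1) []"
      unfolding N by (auto simp: hankel_extensions_def R_def)
    also have "?q ^ (?p - m) * card \<dots> = ?q ^ (?p - m + 2 * (m - d - 1))"
      using smaller[of "[]"] by (simp add: power_add)
    also have "?p - m + 2 * (m - d - 1) = m" using True d by linarith
    finally show ?thesis .
  next
    case False
    have "card ?S = card {y. length y = m + n + 1 - ?p
        \<and> take (m - ?p) y = drop ?p (invert_tail d b) \<and> R y}"
      by (rule card_lists_with_prefix_drop_ge[OF lib]) (use False mn in simp_all)
    also have "\<dots> = card (hankel_extensions (m - d - 1) (n - d - 1) (drop ?p (invert_tail d b)))"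
      unfolding N using lib by (simp add: hankel_extensions_def R_def)
    also have "\<dots> = ?q ^ (2 * (m - d - 1) - (m - ?p))"
      using smaller[of "drop ?p (invert_tail d b)"] lib False by simp
    also have "2 * (m - d - 1) - (m - ?p) = m" using False by linarith
    finally show ?thesis .
  qed
  ultimately show ?thesis by simp
qed

lemma card_hankel_extensions:
  fixes a :: "'a::{finite, field} list"
  assumes "m \<le> n" and "length a \<le> m"
  shows "card (hankel_extensions m n a) = card (UNIV :: 'a set) ^ (2 * m - length a)"
  using assms
proof (induction m arbitrary: n a rule: less_induct)
  case (less m n a)
  have "card (hankel_extensions m n b) = card (UNIV :: 'a set) ^ m" if b: "length b = m" for b :: "'a list"
  proof (cases "\<exists>i<m. b ! i \<noteq> 0")
    case True
    define d where "d = (LEAST i. b ! i \<noteq> 0)"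
    obtain i where "i < m" "b ! i \<noteq> 0" using True by blast
    moreover have "d \<le> i" unfolding d_def by (rule Least_le) fact
    moreover have "b ! d \<noteq> 0" unfolding d_def by (rule LeastI) fact
    ultimately have d: "d < m" "b ! d \<noteq> 0" by simp_all
    have "\<forall>i<d. b ! i = 0" unfolding d_def using not_less_Least by blast
    with b less.prems(1) d show ?thesis
      using less.IH[of "m - d - 1" "n - d - 1"] by (intro card_hankel_extensions_nonzero_prefix) auto
  qed (use card_hankel_extensions_zero_prefix b less.prems in auto)
  then show ?case using card_hankel_extensions_of_full less.prems(2) by blast
qed

theorem lemma16:
  fixes a :: "'a::{finite, field} list" and k m n :: nat
  assumes "k \<le> m" and "m \<le> n + 1" and "length a = k"
  shows "card {x :: 'a list. length x = m + n + 1 \<and> take k x = a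
                 \<and> mat_rank (hankel m n x) \<le> m}
         = card (UNIV :: 'a set) ^ (2 * m - k)"
proof (cases "m \<le> n")
  case True
  have "{x :: 'a list. length x = m + n + 1 \<and> take k x = a \<and> mat_rank (hankel m n x) \<le> m}
      = hankel_extensions m n a"
    using assms(3) by (auto simp: hankel_extensions_def mat_rank_hankel_le_iff)
  then show ?thesis using card_hankel_extensions[OF True, of a] assms by simp
next
  case False
  then have mn: "m = n + 1" using assms(2) by simp
  have "mat_rank (hankel m n x) \<le> m" for x :: "'a list"
    unfolding mat_rank_def using vec_space.rank_le_nc[of "hankel m n x" "m + 1" "n + 1"] mn
    by (simp add: hankel_def)
  then have "{x :: 'a list. length x = m + n + 1 \<and> take k x = a \<and> mat_rank (hankel m n x) \<le> m}
      = {x. length x = m + n + 1 \<and> take k x = a}" by auto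
  also have "card \<dots> = card (UNIV :: 'a set) ^ (m + n + 1 - k)"
    by (rule card_lists_with_prefix) (use assms in auto)
  finally show ?thesis using mn by (simp add: mult_2)
qed

end
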